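(* Let $\Gamma$ be a $(d+1)$-vertex-connected graph with at least $d+1$ vertices, and let $(q,\Gamma)$ be a framework in $\mathbb{R}^d$ with the convex containment property. Then there is a non-symmetric equilibrium stress matrix $\Omega$ of $(q,\Gamma)$ with co-rank $d+1$ (i.e., $\dim\ker\Omega=d+1$).
   Context: A framework $(q,\Gamma)$ in $\mathbb{R}^d$ has the convex containment property if (1) for each vertex, the positions of its neighbors have affine span of dimension $d$, and (2) there is a set of $d+1$ exceptional vertices such that every other vertex $i$ has $q(i)$ in the interior of the convex hull of the positions of its neighbors. A non-symmetric equilibrium stress matrix of $(q,\Gamma)$ is a real matrix $\Omega$ indexed by $V\times V$ with $\Omega(u,w)=0$ whenever $u\ne w$ and $\{u,w\}$ is not an edge, $\sum_w\Omega(u,w)=0$ for all $u$, and $\sum_w\Omega(u,w)q(w)=0$ for all $u$. *)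

theory Defs
  imports "HOL-Analysis.Analysis"
begin

definition simple_graph :: "('v \<Rightarrow> 'v \<Rightarrow> bool) \<Rightarrow> bool" where
  "simple_graph E \<longleftrightarrow> (\<forall>u w. E u w \<longrightarrow> E w u) \<and> (\<forall>u. \<not> E u u)"

definition neighbors :: "('v \<Rightarrow> 'v \<Rightarrow> bool) \<Rightarrow> 'v \<Rightarrow> 'v set" where
  "neighbors E i = {j. E i j}"

definition connected_on :: "('v \<Rightarrow> 'v \<Rightarrow> bool) \<Rightarrow> 'v set \<Rightarrow> bool" where
  "connected_on E S \<longleftrightarrow>
     (\<forall>u\<in>S. \<forall>w\<in>S. (\<lambda>a b. E a b \<and> a \<in> S \<and> b \<in> S)\<^sup>*\<^sup>* u w)"

text \<open>k-vertex-connectivity: deleting any set of fewer than k vertices leaves a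
connected graph. (The vertex count condition is stated separately.)\<close>
definition vertex_connected :: "nat \<Rightarrow> ('v \<Rightarrow> 'v \<Rightarrow> bool) \<Rightarrow> bool" where
  "vertex_connected k E \<longleftrightarrow> (\<forall>X. card X < k \<longrightarrow> connected_on E (UNIV - X))"

definition convex_containment ::
    "('v::finite \<Rightarrow> real^'d) \<Rightarrow> ('v \<Rightarrow> 'v \<Rightarrow> bool) \<Rightarrow> bool" where
  "convex_containment q E \<longleftrightarrow>
     (\<forall>i. aff_dim (q ` neighbors E i) = int CARD('d)) \<and>
     (\<exists>X. card X = CARD('d) + 1 \<and>
          (\<forall>i. i \<notin> X \<longrightarrow> q i \<in> interior (convex hull (q ` neighbors E i))))"

definition nonsym_equilibrium_stress ::
    "('v::finite \<Rightarrow> real^'d) \<Rightarrow> ('v \<Rightarrow> 'v \<Rightarrow> bool) \<Rightarrow> real^'v^'v \<Rightarrow> bool" where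
  "nonsym_equilibrium_stress q E \<Omega> \<longleftrightarrow>
     (\<forall>u w. u \<noteq> w \<and> \<not> E u w \<longrightarrow> \<Omega> $ u $ w = 0) \<and>
     (\<forall>u. (\<Sum>w\<in>UNIV. \<Omega> $ u $ w) = 0) \<and>
     (\<forall>u. (\<Sum>w\<in>UNIV. \<Omega> $ u $ w *\<^sub>R q w) = 0)"

end

theory Submission
  imports Defs
begin

text \<open>Each non-exceptional vertex i lies in the interior of the convex hull of its neighbours,
  so it is a convex combination of them with strictly positive weights \<open>\<lambda> i j\<close>. Let P be the
  transition matrix of the random walk with these weights, absorbed at the exceptional set X.
  The matrix I - P with the rows of X set to zero is an equilibrium stress. Its kernel consists
  of the vectors that are harmonic off X; by the maximum principle on the connected graph such a
  vector is determined by its values on X, and since the rows of X vanish, rank-nullity gives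
  kernel dimension exactly \<open>card X = d + 1\<close>.\<close>

lemma convex_hull_finite_image:
  fixes q :: "'i \<Rightarrow> 'a::real_vector"
  assumes "finite N"
  shows "convex hull (q ` N) =
    {y. \<exists>\<mu>. (\<forall>j\<in>N. 0 \<le> \<mu> j) \<and> sum \<mu> N = 1 \<and> (\<Sum>j\<in>N. \<mu> j *\<^sub>R q j) = y}"
proof (intro set_eqI iffI)
  fix y assume "y \<in> convex hull (q ` N)"
  then obtain u where u: "\<forall>p\<in>q ` N. 0 \<le> u p" "sum u (q ` N) = 1" "(\<Sum>p\<in>q ` N. u p *\<^sub>R p) = y"
    using convex_hull_finite[of "q ` N"] assms by auto
  \<comment> \<open>split the weight of each point evenly among the indices mapped to it\<close>
  define c where "c p = real (card {j\<in>N. q j = p})" for p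
  define \<mu> where "\<mu> j = u (q j) / c (q j)" for j
  have c_pos: "c p > 0" if "p \<in> q ` N" for p
    using that assms by (auto simp: c_def card_gt_0_iff)
  have fibre_sum: "(\<Sum>j | j \<in> N \<and> q j = p. \<mu> j) = u p"
    and fibre_comb: "(\<Sum>j | j \<in> N \<and> q j = p. \<mu> j *\<^sub>R q j) = u p *\<^sub>R p"
    if "p \<in> q ` N" for p
  proof -
    have "(\<Sum>j | j \<in> N \<and> q j = p. \<mu> j) = (\<Sum>j | j \<in> N \<and> q j = p. u p / c p)"
      by (rule sum.cong) (auto simp: \<mu>_def)
    then show "(\<Sum>j | j \<in> N \<and> q j = p. \<mu> j) = u p"
      using c_pos[OF that] by (simp add: c_def)
    have "(\<Sum>j | j \<in> N \<and> q j = p. \<mu> j *\<^sub>R q j) = (\<Sum>j | j \<in> N \<and> q j = p. \<mu> j) *\<^sub>R p"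
      by (auto simp: scaleR_sum_left intro: sum.cong)
    then show "(\<Sum>j | j \<in> N \<and> q j = p. \<mu> j *\<^sub>R q j) = u p *\<^sub>R p"
      by (simp add: \<open>(\<Sum>j | j \<in> N \<and> q j = p. \<mu> j) = u p\<close>)
  qed
  have "sum \<mu> N = 1"
    using u(2) fibre_sum by (simp add: sum.image_gen[OF assms, of \<mu> q] cong: sum.cong)
  moreover have "(\<Sum>j\<in>N. \<mu> j *\<^sub>R q j) = y"
    using u(3) fibre_comb by (simp add: sum.image_gen[OF assms, of _ q] cong: sum.cong)
  moreover have "\<forall>j\<in>N. 0 \<le> \<mu> j"
    using u(1) by (simp add: \<mu>_def c_def)
  ultimately show "y \<in> {y. \<exists>\<mu>. (\<forall>j\<in>N. 0 \<le> \<mu> j) \<and> sum \<mu> N = 1 \<and> (\<Sum>j\<in>N. \<mu> j *\<^sub>R q j) = y}"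
    by blast
next
  fix y assume "y \<in> {y. \<exists>\<mu>. (\<forall>j\<in>N. 0 \<le> \<mu> j) \<and> sum \<mu> N = 1 \<and> (\<Sum>j\<in>N. \<mu> j *\<^sub>R q j) = y}"
  then obtain \<mu> where "\<forall>j\<in>N. 0 \<le> \<mu> j" "sum \<mu> N = 1" "(\<Sum>j\<in>N. \<mu> j *\<^sub>R q j) = y"
    by blast
  then show "y \<in> convex hull (q ` N)"
    using convex_sum[OF assms convex_convex_hull, of \<mu> q "q ` N"] by (simp add: hull_inc)
qed

lemma interior_convex_hull_positive_weights:
  fixes q :: "'i \<Rightarrow> 'a::real_normed_vector"
  assumes fin: "finite N" and p: "p \<in> interior (convex hull (q ` N))"
  obtains w where "\<forall>j\<in>N. 0 < w j" "sum w N = 1" "(\<Sum>j\<in>N. w j *\<^sub>R q j) = p"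
proof -
  \<comment> \<open>Push p slightly away from the barycentre c; the pushed point is still in the hull,
    and averaging its weights with the uniform weights of c gives positive weights for p.\<close>
  have n_pos: "real (card N) > 0"
    using p fin by (auto simp: card_gt_0_iff)
  define c where "c = (\<Sum>j\<in>N. (1 / real (card N)) *\<^sub>R q j)"
  obtain e where e: "e > 0" "ball p e \<subseteq> convex hull (q ` N)"
    using p by (meson mem_interior)
  define r where "r = norm (p - c) + 1"
  define t where "t = e / (2 * r)"
  have r: "r > 0"
    using norm_ge_zero[of "p - c"] unfolding r_def by linarith
  then have t: "t > 0"
    unfolding t_def using e(1) by simp
  have "norm (t *\<^sub>R (p - c)) \<le> t * r"
    using t by (simp add: r_def)
  also have "\<dots> = e / 2"
    using r by (simp add: t_def)
  also have "\<dots> < e"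
    using e(1) by simp
  finally have "p + t *\<^sub>R (p - c) \<in> convex hull (q ` N)"
    using e(2) by (auto simp: dist_norm)
  then obtain \<mu> where \<mu>: "\<forall>j\<in>N. 0 \<le> \<mu> j" "sum \<mu> N = 1"
      "(\<Sum>j\<in>N. \<mu> j *\<^sub>R q j) = p + t *\<^sub>R (p - c)"
    unfolding convex_hull_finite_image[OF fin] by blast
  define w where "w j = (\<mu> j + t / real (card N)) / (1 + t)" for j
  have "\<forall>j\<in>N. 0 < w j"
    using \<mu>(1) t n_pos by (simp add: w_def add_nonneg_pos)
  moreover have "sum w N = 1"
    using \<mu>(2) t n_pos by (simp add: w_def sum_divide_distrib[symmetric] sum.distrib)
  moreover have "(\<Sum>j\<in>N. w j *\<^sub>R q j) = p"
  proof -
    have "(1 + t) *\<^sub>R (\<Sum>j\<in>N. w j *\<^sub>R q j)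
        = (\<Sum>j\<in>N. \<mu> j *\<^sub>R q j + (t / real (card N)) *\<^sub>R q j)"
      unfolding scaleR_sum_right using t
      by (intro sum.cong refl) (simp add: w_def scaleR_add_left)
    also have "\<dots> = (1 + t) *\<^sub>R p"
      by (simp add: sum.distrib \<mu>(3) c_def scaleR_sum_right algebra_simps)
    finally show ?thesis
      using t by simp
  qed
  ultimately show ?thesis
    by (rule that)
qed

lemma null_space_eq_orthogonal_rows:
  fixes A :: "real^'n^'m"
  shows "{x. A *v x = 0} = {x. \<forall>r\<in>span (rows A). orthogonal r x}"
proof (intro set_eqI iffI; clarsimp)
  fix x r assume "A *v x = 0" "r \<in> span (rows A)"
  then show "orthogonal r x"
    using orthogonal_nullspace_rowspace orthogonal_commute by blast
next
  fix x assume "\<forall>r\<in>span (rows A). orthogonal r x"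
  then have "orthogonal (row i A) x" for i
    unfolding rows_def by (blast intro: span_base)
  then show "A *v x = 0"
    by (simp add: vec_eq_iff matrix_mult_dot orthogonal_def row_def)
qed

lemma dim_null_space_add_rank:
  fixes A :: "real^'n^'m"
  shows "dim {x. A *v x = 0} + rank A = CARD('n)"
  using dim_subspace_orthogonal_to_vectors[of "span (rows A)" UNIV]
  by (simp add: null_space_eq_orthogonal_rows row_rank_def)

lemma rank_le_card_nonzero_rows:
  fixes A :: "real^'n^'m"
  assumes "\<forall>i\<in>X. A $ i = 0"
  shows "rank A \<le> CARD('m) - card X"
proof -
  have "rows A \<subseteq> span ((\<lambda>i. row i A) ` (- X))"
  proof (clarsimp simp: rows_def)
    fix i
    have "row i A = 0" if "i \<in> X"
      using assms that by (simp add: row_def vec_eq_iff)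
    then show "row i A \<in> span ((\<lambda>i. row i A) ` (- X))"
      by (cases "i \<in> X") (auto simp: span_zero intro: span_base)
  qed
  then have "rank A \<le> card ((\<lambda>i. row i A) ` (- X) :: (real^'n) set)"
    unfolding row_rank_def by (rule dim_le_card) simp
  also have "\<dots> \<le> card (- X)"
    by (rule card_image_le) simp
  finally show ?thesis by (simp add: Compl_eq_Diff_UNIV card_Diff_subset)
qed

lemma dim_null_space_eq_card_zero_rows:
  fixes A :: "real^'n^'n"
  assumes zero_rows: "\<forall>i\<in>X. A $ i = 0"
    and determined: "\<And>x. A *v x = 0 \<Longrightarrow> \<forall>i\<in>X. x $ i = 0 \<Longrightarrow> x = 0"
  shows "dim {x. A *v x = 0} = card X"
proof (rule antisym)
  have X_le: "card X \<le> CARD('n)"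
    by (rule card_mono) auto
  let ?K = "{x. A *v x = 0}" and ?T = "{x :: real^'n. \<forall>i\<in>X. x $ i = 0}"
  have "subspace ?K" "subspace ?T"
    by (auto simp: subspace_def matrix_vector_right_distrib matrix_vector_mult_scaleR)
  then have "dim {x + y |x y. x \<in> ?K \<and> y \<in> ?T} + dim (?K \<inter> ?T) = dim ?K + dim ?T"
    by (rule dim_sums_Int)
  moreover have "?K \<inter> ?T = {0}"
    using determined by auto
  moreover have "dim ?T = CARD('n) - card X"
    using dim_substandard_cart[of "- X"]
    by (simp add: dim_vec_eq[symmetric] Compl_eq_Diff_UNIV card_Diff_subset Ball_def)
  moreover have "dim {x + y |x y. x \<in> ?K \<and> y \<in> ?T} \<le> CARD('n)"
    by (rule dim_subset_UNIV_cart)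
  ultimately show "dim ?K \<le> card X"
    using X_le by simp
  show "card X \<le> dim ?K"
    using dim_null_space_add_rank[of A] rank_le_card_nonzero_rows[OF zero_rows] X_le
    by linarith
qed

lemma weighted_average_eq_max:
  fixes f w :: "'a \<Rightarrow> real"
  assumes "finite N" "\<forall>j\<in>N. 0 < w j" "sum w N = 1" "\<forall>j\<in>N. f j \<le> m"
    and "(\<Sum>j\<in>N. w j * f j) = m" "k \<in> N"
  shows "f k = m"
proof -
  have "(\<Sum>j\<in>N. w j * (m - f j)) = 0"
    using assms(3,5) by (simp add: right_diff_distrib sum_subtractf sum_distrib_right[symmetric])
  moreover have "(\<Sum>j\<in>N. w j * (m - f j)) = 0 \<longleftrightarrow> (\<forall>j\<in>N. w j * (m - f j) = 0)"
    using assms(2,4) by (intro sum_nonneg_eq_0_iff[OF assms(1)]) (simp add: less_imp_le)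
  ultimately have "w k * (m - f k) = 0"
    using assms(6) by simp
  moreover have "w k > 0"
    using assms(2,6) by blast
  ultimately show ?thesis
    by simp
qed

definition transition_weights :: "('v \<Rightarrow> 'v \<Rightarrow> bool) \<Rightarrow> 'v set \<Rightarrow> ('v \<Rightarrow> 'v \<Rightarrow> real) \<Rightarrow> bool"
  where "transition_weights E X lam \<longleftrightarrow>
    (\<forall>i. i \<notin> X \<longrightarrow> (\<forall>j\<in>neighbors E i. 0 < lam i j) \<and> sum (lam i) (neighbors E i) = 1)"

lemma harmonic_max_on_boundary:
  fixes f :: "'v::finite \<Rightarrow> real"
  assumes conn: "\<And>u w. E\<^sup>*\<^sup>* u w" and "X \<noteq> {}"
    and lam: "transition_weights E X lam"
    and harmonic: "\<And>i. i \<notin> X \<Longrightarrow> (\<Sum>j\<in>neighbors E i. lam i j * f j) = f i"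
  obtains b where "b \<in> X" "\<And>v. f v \<le> f b"
proof -
  define m where "m = Max (range f)"
  have le_m: "f v \<le> m" for v
    by (simp add: m_def)
  have "m \<in> range f"
    unfolding m_def by (rule Max_in) auto
  then obtain a where "f a = m"
    by blast
  have "\<exists>b\<in>X. f b = m"
  proof (rule ccontr)
    assume no_max: "\<not> (\<exists>b\<in>X. f b = m)"
    \<comment> \<open>then the maximum propagates along every edge, hence by connectivity to X\<close>
    have "f z = m" if "E\<^sup>*\<^sup>* a z" for z
      using that
    proof (induction rule: rtranclp_induct)
      case base
      then show ?case by (fact \<open>f a = m\<close>)
    next
      case (step y z)
      then have "y \<notin> X"
        using no_max by auto
      show ?case
      proof (rule weighted_average_eq_max[where w = "lam y"])
        show "\<forall>j\<in>neighbors E y. 0 < lam y j" "sum (lam y) (neighbors E y) = 1"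
          using lam \<open>y \<notin> X\<close> by (simp_all add: transition_weights_def)
        show "(\<Sum>j\<in>neighbors E y. lam y j * f j) = m"
          using harmonic[OF \<open>y \<notin> X\<close>] step.IH by simp
        show "z \<in> neighbors E y"
          using step.hyps(2) by (simp add: neighbors_def)
      qed (simp_all add: le_m)
    qed
    moreover obtain b where "b \<in> X"
      using \<open>X \<noteq> {}\<close> by blast
    ultimately have "f b = m"
      using conn[of a b] by simp
    with \<open>b \<in> X\<close> no_max show False
      by blast
  qed
  then obtain b where "b \<in> X" "f b = m"
    by blast
  then show ?thesis
    using le_m by (intro that[of b]) simp_all
qed

definition walk_laplacian ::
    "('v::finite \<Rightarrow> 'v \<Rightarrow> bool) \<Rightarrow> 'v set \<Rightarrow> ('v \<Rightarrow> 'v \<Rightarrow> real) \<Rightarrow> real^'v^'v"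
  where "walk_laplacian E X lam =
    (\<chi> i j. if i \<in> X then 0 else of_bool (j = i) - (if j \<in> neighbors E i then lam i j else 0))"

lemma walk_laplacian_row_comb:
  fixes g :: "'v::finite \<Rightarrow> 'a::real_vector"
  shows "(\<Sum>j\<in>UNIV. walk_laplacian E X lam $ i $ j *\<^sub>R g j) =
    (if i \<in> X then 0 else g i - (\<Sum>j\<in>neighbors E i. lam i j *\<^sub>R g j))"
  by (simp add: walk_laplacian_def scaleR_diff_left sum_subtractf if_distrib[of "\<lambda>x. x *\<^sub>R _"]
      of_bool_def sum.If_cases Int_def)

lemma walk_laplacian_mult_vec:
  "(walk_laplacian E X lam *v y) $ i =
    (if i \<in> X then 0 else y $ i - (\<Sum>j\<in>neighbors E i. lam i j * y $ j))"
  using walk_laplacian_row_comb[of E X lam i "\<lambda>j. y $ j"]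
  by (simp add: matrix_vector_mult_def)

lemma walk_laplacian_equilibrium_stress:
  assumes "transition_weights E X lam"
    and "\<And>i. i \<notin> X \<Longrightarrow> (\<Sum>j\<in>neighbors E i. lam i j *\<^sub>R q j) = q i"
  shows "nonsym_equilibrium_stress q E (walk_laplacian E X lam)"
  unfolding nonsym_equilibrium_stress_def
proof (intro conjI allI impI)
  fix u w assume "u \<noteq> w \<and> \<not> E u w"
  then show "walk_laplacian E X lam $ u $ w = 0"
    by (auto simp: walk_laplacian_def neighbors_def)
next
  fix u
  show "(\<Sum>w\<in>UNIV. walk_laplacian E X lam $ u $ w) = 0"
    using walk_laplacian_row_comb[of E X lam u "\<lambda>_. 1::real"] assms(1)
    by (simp add: transition_weights_def)
  show "(\<Sum>w\<in>UNIV. walk_laplacian E X lam $ u $ w *\<^sub>R q w) = 0"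
    unfolding walk_laplacian_row_comb using assms(2) by simp
qed

lemma walk_laplacian_kernel_vanishing_on_boundary:
  assumes conn: "\<And>u w. E\<^sup>*\<^sup>* u w" and "X \<noteq> {}"
    and lam: "transition_weights E X lam"
    and ker: "walk_laplacian E X lam *v y = 0" and boundary: "\<forall>i\<in>X. y $ i = 0"
  shows "y = 0"
proof -
  have "(\<Sum>j\<in>neighbors E i. lam i j * y $ j) = y $ i" if "i \<notin> X" for i
    using arg_cong[OF ker, of "\<lambda>v. v $ i"] that by (simp add: walk_laplacian_mult_vec)
  then have harmonic: "(\<Sum>j\<in>neighbors E i. lam i j * (s * y $ j)) = s * y $ i" if "i \<notin> X" for i s
    using that by (simp add: mult.left_commute sum_distrib_left[symmetric])
  have "s * y $ v \<le> 0" for s v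
  proof -
    obtain b where "b \<in> X" "\<And>v. s * y $ v \<le> s * y $ b"
      using harmonic_max_on_boundary[OF conn \<open>X \<noteq> {}\<close> lam, of "\<lambda>j. s * y $ j"] harmonic
      by blast
    then show ?thesis
      using boundary by (metis mult_zero_right)
  qed
  from this[of 1] this[of "-1"] show ?thesis
    by (simp add: vec_eq_iff antisym)
qed

lemma dim_null_space_walk_laplacian:
  assumes "\<And>u w. E\<^sup>*\<^sup>* u w" and "X \<noteq> {}" and "transition_weights E X lam"
  shows "dim {y. walk_laplacian E X lam *v y = 0} = card X"
proof (rule dim_null_space_eq_card_zero_rows)
  show "\<forall>i\<in>X. walk_laplacian E X lam $ i = 0"
    by (simp add: walk_laplacian_def vec_eq_iff)
qed (use walk_laplacian_kernel_vanishing_on_boundary[OF assms] in blast)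

theorem lemma5p8:
  fixes E :: "'v::finite \<Rightarrow> 'v \<Rightarrow> bool" and q :: "'v \<Rightarrow> real^'d"
  assumes "simple_graph E"
    and "vertex_connected (CARD('d) + 1) E"
    and "CARD('v) \<ge> CARD('d) + 1"
    and "convex_containment q E"
  shows "\<exists>\<Omega> :: real^'v^'v. nonsym_equilibrium_stress q E \<Omega> \<and>
           dim {x :: real^'v. \<Omega> *v x = 0} = CARD('d) + 1"
proof -
  have "card ({} :: 'v set) < CARD('d) + 1"
    by simp
  then have "connected_on E (UNIV - {})"
    using assms(2) unfolding vertex_connected_def by blast
  then have conn: "E\<^sup>*\<^sup>* u w" for u w
    by (simp add: connected_on_def)
  obtain X where card_X: "card X = CARD('d) + 1"
    and interior: "\<And>i. i \<notin> X \<Longrightarrow> q i \<in> interior (convex hull (q ` neighbors E i))"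
    using assms(4) unfolding convex_containment_def by blast
  have "\<exists>w. i \<notin> X \<longrightarrow> (\<forall>j\<in>neighbors E i. 0 < w j) \<and> sum w (neighbors E i) = 1
      \<and> (\<Sum>j\<in>neighbors E i. w j *\<^sub>R q j) = q i" for i
    using interior_convex_hull_positive_weights[OF finite interior] by metis
  then obtain lam where lam: "\<And>i. i \<notin> X \<Longrightarrow> (\<forall>j\<in>neighbors E i. 0 < lam i j)
      \<and> sum (lam i) (neighbors E i) = 1 \<and> (\<Sum>j\<in>neighbors E i. lam i j *\<^sub>R q j) = q i"
    by metis
  then have weights: "transition_weights E X lam"
    by (simp add: transition_weights_def)
  have "X \<noteq> {}"
    using card_X by auto
  have "nonsym_equilibrium_stress q E (walk_laplacian E X lam)"
    using walk_laplacian_equilibrium_stress[OF weights] lam by blast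
  moreover have "dim {y. walk_laplacian E X lam *v y = 0} = CARD('d) + 1"
    using dim_null_space_walk_laplacian[OF conn \<open>X \<noteq> {}\<close> weights] card_X by simp
  ultimately show ?thesis
    by blast
qed

end
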